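(* Let $S_0,\dots,S_{k-1}$ be martingales on $2^{<\omega}$ and let $c>\max_{j<k}S_j(\bot)+\frac12\sum_{j<k}\sqrt{\mathrm{Var}(S_j\mid\bot)}$. Then there exists a martingale $S^*$ with $S^*(\bot)<c$ such that $S^*(\rho)>\max_{j<k}S_j(\rho)$ for all $\rho\in2^{<\omega}$. Moreover, $S^*$ can be taken bounded if each $S_j$ is bounded.
   Context: A martingale is a function $S:2^{<\omega}\to\mathbb{R}^{\ge0}$ with $2S(\rho)=S(\rho0)+S(\rho1)$ for all $\rho$; $\bot$ is the empty string. For a martingale $S$ and $\rho\in2^{<\omega}$, $\mathrm{Var}(S\mid\rho)=\lim_{t\to\infty}2^{-(t-|\rho|)}\sum_{\sigma\in 2^t,\ \sigma\succeq\rho}(S(\sigma)-S(\rho))^2$. A function is bounded if its range is a bounded subset of $\mathbb{R}$. *)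

theory Defs
  imports "HOL-Analysis.Analysis" "HOL-Library.Sublist"
begin

text \<open>Binary strings 2^{<omega} are bool lists; rho0 = rho @ [False], rho1 = rho @ [True];
  the empty string bot is [].\<close>

definition martingale :: "(bool list \<Rightarrow> real) \<Rightarrow> bool" where
  "martingale S \<longleftrightarrow>
     (\<forall>\<rho>. S \<rho> \<ge> 0) \<and> (\<forall>\<rho>. 2 * S \<rho> = S (\<rho> @ [False]) + S (\<rho> @ [True]))"

definition var_seq :: "(bool list \<Rightarrow> real) \<Rightarrow> bool list \<Rightarrow> nat \<Rightarrow> real" where
  "var_seq S \<rho> t =
     (\<Sum>\<sigma>\<in>{\<sigma>. length \<sigma> = t \<and> prefix \<rho> \<sigma>}. (S \<sigma> - S \<rho>)^2) / 2 ^ (t - length \<rho>)"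

definition Var :: "(bool list \<Rightarrow> real) \<Rightarrow> bool list \<Rightarrow> real" where
  "Var S \<rho> = lim (var_seq S \<rho>)"

end

theory Submission
  imports Defs
begin

text \<open>The pointwise maximum \<open>f\<close> of the \<open>S\<^sub>j\<close> is a submartingale dominated by the martingale
  \<open>\<Sum>\<^sub>j S\<^sub>j\<close>, so its conditional averages over the extensions of \<open>\<rho>\<close> of growing length
  increase to a martingale majorant of \<open>f\<close>. Below the root,
  \<open>f \<sigma> \<le> f \<bottom> + \<Sum>\<^sub>j (S\<^sub>j \<sigma> - S\<^sub>j \<bottom>)\<^sup>+\<close>; as \<open>S\<^sub>j - S\<^sub>j \<bottom>\<close> has mean zero, its positive part
  has half the mean of its absolute value, which by Jensen is at most \<open>\<surd>Var(S\<^sub>j | \<bottom>)\<close>.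
  So the majorant starts below \<open>c\<close>, and adding half the remaining gap makes the domination
  strict. The majorant lies below \<open>\<Sum>\<^sub>j S\<^sub>j\<close>, which gives boundedness.\<close>

definition fair :: "(bool list \<Rightarrow> real) \<Rightarrow> bool" where
  "fair g \<longleftrightarrow> (\<forall>\<rho>. 2 * g \<rho> = g (\<rho> @ [False]) + g (\<rho> @ [True]))"

definition submartingale :: "(bool list \<Rightarrow> real) \<Rightarrow> bool" where
  "submartingale g \<longleftrightarrow> (\<forall>\<rho>. 2 * g \<rho> \<le> g (\<rho> @ [False]) + g (\<rho> @ [True]))"

lemma martingale_iff_fair: "martingale S \<longleftrightarrow> (\<forall>\<rho>. 0 \<le> S \<rho>) \<and> fair S"
  by (auto simp: martingale_def fair_def)

lemma fair_imp_submartingale: "fair g \<Longrightarrow> submartingale g"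
  by (simp add: fair_def submartingale_def)

lemma fair_sum: "(\<And>j. j \<in> J \<Longrightarrow> fair (S j)) \<Longrightarrow> fair (\<lambda>\<rho>. \<Sum>j\<in>J. S j \<rho>)"
  by (simp add: fair_def sum_distrib_left sum.distrib[symmetric])

lemma submartingale_square_dev:
  assumes "fair S"
  shows "submartingale (\<lambda>\<sigma>. (S \<sigma> - a)\<^sup>2)"
  unfolding submartingale_def
proof
  fix \<rho>
  let ?u = "S (\<rho> @ [False])" and ?v = "S (\<rho> @ [True])"
  have mean: "S \<rho> = (?u + ?v) / 2" using assms[unfolded fair_def, rule_format, of \<rho>] by simp
  have "(?u - a)\<^sup>2 + (?v - a)\<^sup>2 - 2 * (S \<rho> - a)\<^sup>2 = (?u - ?v)\<^sup>2 / 2"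
    unfolding mean by (simp add: power2_eq_square field_simps)
  then show "2 * (S \<rho> - a)\<^sup>2 \<le> (?u - a)\<^sup>2 + (?v - a)\<^sup>2"
    using zero_le_power2[of "?u - ?v"] by linarith
qed

fun avg_ext :: "(bool list \<Rightarrow> real) \<Rightarrow> bool list \<Rightarrow> nat \<Rightarrow> real" where
  "avg_ext g \<rho> 0 = g \<rho>"
| "avg_ext g \<rho> (Suc n) = (avg_ext g (\<rho> @ [False]) n + avg_ext g (\<rho> @ [True]) n) / 2"

lemma avg_ext_mono: "(\<And>\<sigma>. g \<sigma> \<le> h \<sigma>) \<Longrightarrow> avg_ext g \<rho> n \<le> avg_ext h \<rho> n"
  by (induction n arbitrary: \<rho>) (simp_all add: add_mono divide_right_mono)

lemma avg_ext_const: "avg_ext (\<lambda>\<sigma>. a) \<rho> n = a"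
  by (induction n arbitrary: \<rho>) simp_all

lemma avg_ext_add: "avg_ext (\<lambda>\<sigma>. g \<sigma> + h \<sigma>) \<rho> n = avg_ext g \<rho> n + avg_ext h \<rho> n"
  by (induction n arbitrary: \<rho>) (simp_all add: add_divide_distrib)

lemma avg_ext_diff: "avg_ext (\<lambda>\<sigma>. g \<sigma> - h \<sigma>) \<rho> n = avg_ext g \<rho> n - avg_ext h \<rho> n"
  by (induction n arbitrary: \<rho>) (simp_all add: add_divide_distrib diff_divide_distrib)

lemma avg_ext_cmult: "avg_ext (\<lambda>\<sigma>. a * g \<sigma>) \<rho> n = a * avg_ext g \<rho> n"
  by (induction n arbitrary: \<rho>) (simp_all add: field_simps)

lemma avg_ext_sum: "avg_ext (\<lambda>\<sigma>. \<Sum>j\<in>J. g j \<sigma>) \<rho> n = (\<Sum>j\<in>J. avg_ext (g j) \<rho> n)"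
  by (induction n arbitrary: \<rho>) (simp_all add: sum.distrib sum_divide_distrib add_divide_distrib)

lemma avg_ext_fair: "fair g \<Longrightarrow> avg_ext g \<rho> n = g \<rho>"
  by (induction n arbitrary: \<rho>) (simp_all add: fair_def field_simps)

lemma incseq_avg_ext:
  assumes "submartingale g"
  shows "incseq (avg_ext g \<rho>)"
proof (rule incseq_SucI)
  show "avg_ext g \<rho> n \<le> avg_ext g \<rho> (Suc n)" for n
  proof (induction n arbitrary: \<rho>)
    case 0
    show ?case using assms[unfolded submartingale_def, rule_format, of \<rho>] by simp
  next
    case (Suc n)
    show ?case
      unfolding avg_ext.simps(2)[of g \<rho>] by (intro divide_right_mono add_mono Suc.IH) simp
  qed
qed

lemma avg_ext_square_le: "(avg_ext g \<rho> n)\<^sup>2 \<le> avg_ext (\<lambda>\<sigma>. (g \<sigma>)\<^sup>2) \<rho> n"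
proof (induction n arbitrary: \<rho>)
  case (Suc n)
  let ?a = "avg_ext g (\<rho> @ [False]) n" and ?b = "avg_ext g (\<rho> @ [True]) n"
  have "((?a + ?b) / 2)\<^sup>2 = (?a\<^sup>2 + ?b\<^sup>2) / 2 - (?a - ?b)\<^sup>2 / 4"
    by (simp add: power2_eq_square field_simps)
  also have "\<dots> \<le> (?a\<^sup>2 + ?b\<^sup>2) / 2"
    using zero_le_power2[of "?a - ?b"] by linarith
  also have "\<dots> \<le> avg_ext (\<lambda>\<sigma>. (g \<sigma>)\<^sup>2) \<rho> (Suc n)"
    using Suc.IH[of "\<rho> @ [False]"] Suc.IH[of "\<rho> @ [True]"] by simp
  finally show ?case by simp
qed simp

lemma avg_ext_eq_level_sum:
  "avg_ext g \<rho> n = (\<Sum>\<tau> | length \<tau> = n. g (\<rho> @ \<tau>)) / 2 ^ n"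
proof (induction n arbitrary: \<rho>)
  case (Suc n)
  let ?L = "{\<tau>::bool list. length \<tau> = n}"
  have fin: "finite ?L"
    using finite_lists_length_eq[of "UNIV :: bool set" n] by simp
  have split: "{\<tau>. length \<tau> = Suc n} = Cons False ` ?L \<union> Cons True ` ?L"
    by (auto simp: length_Suc_conv image_iff)
  have "(\<Sum>\<tau> | length \<tau> = Suc n. g (\<rho> @ \<tau>))
      = (\<Sum>\<tau>\<in>Cons False ` ?L. g (\<rho> @ \<tau>)) + (\<Sum>\<tau>\<in>Cons True ` ?L. g (\<rho> @ \<tau>))"
    unfolding split using fin by (intro sum.union_disjoint) auto
  also have "\<dots> = (\<Sum>\<tau>\<in>?L. g ((\<rho> @ [False]) @ \<tau>)) + (\<Sum>\<tau>\<in>?L. g ((\<rho> @ [True]) @ \<tau>))"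
    by (simp add: sum.reindex)
  finally show ?case by (simp add: Suc.IH add_divide_distrib)
qed simp

lemma var_seq_eq_avg_ext:
  "var_seq S \<rho> (length \<rho> + n) = avg_ext (\<lambda>\<sigma>. (S \<sigma> - S \<rho>)\<^sup>2) \<rho> n"
proof -
  have "{\<sigma>. length \<sigma> = length \<rho> + n \<and> prefix \<rho> \<sigma>} = (append \<rho>) ` {\<tau>. length \<tau> = n}"
    by (auto simp: prefix_def)
  moreover have "inj_on (append \<rho>) A" for A
    by (rule inj_onI) simp
  ultimately show ?thesis
    by (simp add: var_seq_def avg_ext_eq_level_sum sum.reindex)
qed

lemma avg_ext_square_dev_le_Var:
  assumes "fair S" "convergent (var_seq S \<rho>)"
  shows "avg_ext (\<lambda>\<sigma>. (S \<sigma> - S \<rho>)\<^sup>2) \<rho> n \<le> Var S \<rho>"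
proof -
  have "(\<lambda>n. var_seq S \<rho> (n + length \<rho>)) \<longlonglongrightarrow> Var S \<rho>"
    using assms(2) by (simp add: Var_def convergent_LIMSEQ_iff LIMSEQ_ignore_initial_segment)
  then have "avg_ext (\<lambda>\<sigma>. (S \<sigma> - S \<rho>)\<^sup>2) \<rho> \<longlonglongrightarrow> Var S \<rho>"
    unfolding add.commute[of _ "length \<rho>"] var_seq_eq_avg_ext .
  with incseq_avg_ext[OF submartingale_square_dev[OF assms(1)]] show ?thesis
    by (rule incseq_le)
qed

lemma avg_ext_pos_dev_le:
  assumes "fair S" "convergent (var_seq S \<rho>)"
  shows "avg_ext (\<lambda>\<sigma>. max 0 (S \<sigma> - S \<rho>)) \<rho> n \<le> sqrt (Var S \<rho>) / 2"
proof -
  let ?x = "\<lambda>\<sigma>. S \<sigma> - S \<rho>"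
  have "2 * avg_ext (\<lambda>\<sigma>. max 0 (?x \<sigma>)) \<rho> n = avg_ext (\<lambda>\<sigma>. ?x \<sigma> + \<bar>?x \<sigma>\<bar>) \<rho> n"
    unfolding avg_ext_cmult[symmetric]
    by (rule arg_cong[where f = "\<lambda>g. avg_ext g \<rho> n"]) (auto simp: fun_eq_iff max_def)
  also have "\<dots> = avg_ext (\<lambda>\<sigma>. \<bar>?x \<sigma>\<bar>) \<rho> n"
    using assms(1) by (simp add: avg_ext_add avg_ext_diff avg_ext_const avg_ext_fair)
  also have "\<dots> \<le> sqrt (avg_ext (\<lambda>\<sigma>. (?x \<sigma>)\<^sup>2) \<rho> n)"
    using avg_ext_square_le[of "\<lambda>\<sigma>. \<bar>?x \<sigma>\<bar>" \<rho> n] by (simp add: real_le_rsqrt)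
  also have "\<dots> \<le> sqrt (Var S \<rho>)"
    using avg_ext_square_dev_le_Var[OF assms] by simp
  finally show ?thesis by simp
qed

lemma submartingale_Max:
  assumes "finite J" "J \<noteq> {}" "\<And>j. j \<in> J \<Longrightarrow> submartingale (S j)"
  shows "submartingale (\<lambda>\<rho>. Max ((\<lambda>j. S j \<rho>) ` J))"
  unfolding submartingale_def
proof
  fix \<rho>
  have "Max ((\<lambda>j. S j \<rho>) ` J) \<in> (\<lambda>j. S j \<rho>) ` J"
    using assms(1,2) by simp
  then obtain j where j: "j \<in> J" "Max ((\<lambda>j. S j \<rho>) ` J) = S j \<rho>"
    by auto
  have le_Max: "S j \<sigma> \<le> Max ((\<lambda>j. S j \<sigma>) ` J)" for \<sigma>
    using j(1) assms(1) by simp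
  show "2 * Max ((\<lambda>j. S j \<rho>) ` J)
      \<le> Max ((\<lambda>j. S j (\<rho> @ [False])) ` J) + Max ((\<lambda>j. S j (\<rho> @ [True])) ` J)"
    using j(2) assms(3)[OF j(1), unfolded submartingale_def, rule_format, of \<rho>]
      le_Max[of "\<rho> @ [False]"] le_Max[of "\<rho> @ [True]"]
    by linarith
qed

lemma Max_le_Max_add_sum_pos_diff:
  fixes a b :: "'j \<Rightarrow> real"
  assumes "finite J" "J \<noteq> {}"
  shows "Max (a ` J) \<le> Max (b ` J) + (\<Sum>j\<in>J. max 0 (a j - b j))"
proof -
  have "Max (a ` J) \<in> a ` J"
    using assms by simp
  then obtain j where j: "j \<in> J" "Max (a ` J) = a j"
    by auto
  have "b j \<le> Max (b ` J)"
    using j(1) assms(1) by simp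
  moreover have "max 0 (a j - b j) \<le> (\<Sum>j\<in>J. max 0 (a j - b j))"
    using j(1) assms(1) by (intro member_le_sum) auto
  ultimately show ?thesis
    using j(2) by linarith
qed

lemma bounded_range_sum:
  fixes S :: "'j \<Rightarrow> 'a \<Rightarrow> 'b::real_normed_vector"
  assumes "finite J" "\<And>j. j \<in> J \<Longrightarrow> bounded (range (S j))"
  shows "bounded (range (\<lambda>x. \<Sum>j\<in>J. S j x))"
  using assms by (induction J rule: finite_induct) (auto intro: bounded_plus_comp)

lemma bounded_range_nonneg_le:
  fixes g h :: "'a \<Rightarrow> real"
  assumes "\<And>x. 0 \<le> g x" "\<And>x. g x \<le> h x" "bounded (range h)"
  shows "bounded (range g)"
proof -
  obtain B where "\<And>x. \<bar>h x\<bar> \<le> B"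
    using assms(3) unfolding bounded_real by auto
  then have "\<bar>g x\<bar> \<le> B" for x
    using assms(1,2)[of x] by (smt (verit))
  then show ?thesis
    unfolding bounded_real by auto
qed

locale dominated_submartingale =
  fixes f M :: "bool list \<Rightarrow> real"
  assumes submartingale: "submartingale f"
    and fair_dominator: "fair M"
    and le_dominator: "\<And>\<rho>. f \<rho> \<le> M \<rho>"
begin

definition majorant :: "bool list \<Rightarrow> real" where
  "majorant \<rho> = lim (avg_ext f \<rho>)"

lemma avg_ext_le_dominator: "avg_ext f \<rho> n \<le> M \<rho>"
  using avg_ext_mono[of f M \<rho> n, OF le_dominator] avg_ext_fair[OF fair_dominator] by simp

lemma LIMSEQ_majorant: "avg_ext f \<rho> \<longlonglongrightarrow> majorant \<rho>"
proof -
  obtain L where "avg_ext f \<rho> \<longlonglongrightarrow> L"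
    using incseq_convergent[OF incseq_avg_ext[OF submartingale], of \<rho> "M \<rho>"] avg_ext_le_dominator
    by blast
  then show ?thesis
    by (simp add: majorant_def limI)
qed

lemma le_majorant: "f \<rho> \<le> majorant \<rho>"
  using incseq_le[OF incseq_avg_ext[OF submartingale] LIMSEQ_majorant, of \<rho> 0] by simp

lemma majorant_le: "(\<And>n. avg_ext f \<rho> n \<le> B) \<Longrightarrow> majorant \<rho> \<le> B"
  by (rule LIMSEQ_le_const2[OF LIMSEQ_majorant]) auto

lemma majorant_le_dominator: "majorant \<rho> \<le> M \<rho>"
  by (rule majorant_le) (rule avg_ext_le_dominator)

lemma fair_majorant: "fair majorant"
  unfolding fair_def
proof
  fix \<rho>
  have "(\<lambda>n. avg_ext f \<rho> (Suc n)) \<longlonglongrightarrow> majorant \<rho>"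
    using LIMSEQ_majorant by (rule LIMSEQ_Suc)
  moreover have "(\<lambda>n. avg_ext f \<rho> (Suc n))
      \<longlonglongrightarrow> (majorant (\<rho> @ [False]) + majorant (\<rho> @ [True])) / 2"
    unfolding avg_ext.simps by (intro tendsto_divide tendsto_add LIMSEQ_majorant tendsto_const) simp
  ultimately have "majorant \<rho> = (majorant (\<rho> @ [False]) + majorant (\<rho> @ [True])) / 2"
    by (rule LIMSEQ_unique)
  then show "2 * majorant \<rho> = majorant (\<rho> @ [False]) + majorant (\<rho> @ [True])"
    by simp
qed

lemma martingale_strictly_above:
  assumes "\<And>\<rho>. 0 \<le> f \<rho>" "majorant \<rho>\<^sub>0 < c"
  shows "\<exists>S'. martingale S' \<and> S' \<rho>\<^sub>0 < c \<and> (\<forall>\<rho>. f \<rho> < S' \<rho>)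
           \<and> (bounded (range M) \<longrightarrow> bounded (range S'))"
proof -
  define e where "e = (c - majorant \<rho>\<^sub>0) / 2"
  have "e > 0"
    using assms(2) by (simp add: e_def)
  have majorant_nonneg: "0 \<le> majorant \<rho>" for \<rho>
    using assms(1)[of \<rho>] le_majorant[of \<rho>] by linarith
  define S' where "S' \<rho> = majorant \<rho> + e" for \<rho>
  have "martingale S'"
    using fair_majorant majorant_nonneg \<open>e > 0\<close>
    by (auto simp: martingale_iff_fair fair_def S'_def add_nonneg_pos less_imp_le)
  moreover have "S' \<rho>\<^sub>0 < c" and "f \<rho> < S' \<rho>" for \<rho>
    using le_majorant[of \<rho>] \<open>e > 0\<close> by (auto simp: S'_def e_def field_simps)
  moreover have "bounded (range S')" if "bounded (range M)"
  proof -
    from majorant_nonneg majorant_le_dominator that have "bounded (range majorant)"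
      by (rule bounded_range_nonneg_le)
    then show ?thesis
      unfolding S'_def by (intro bounded_plus_comp) auto
  qed
  ultimately show ?thesis
    by blast
qed

end

lemma dominated_submartingale_Max:
  assumes "finite J" "J \<noteq> {}" "\<And>j. j \<in> J \<Longrightarrow> martingale (S j)"
  shows "dominated_submartingale (\<lambda>\<rho>. Max ((\<lambda>j. S j \<rho>) ` J)) (\<lambda>\<rho>. \<Sum>j\<in>J. S j \<rho>)"
proof
  show "submartingale (\<lambda>\<rho>. Max ((\<lambda>j. S j \<rho>) ` J))"
    using assms by (intro submartingale_Max fair_imp_submartingale) (auto simp: martingale_iff_fair)
  show "fair (\<lambda>\<rho>. \<Sum>j\<in>J. S j \<rho>)"
    using assms(3) by (intro fair_sum) (auto simp: martingale_iff_fair)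
  show "Max ((\<lambda>j. S j \<rho>) ` J) \<le> (\<Sum>j\<in>J. S j \<rho>)" for \<rho>
  proof -
    have "Max ((\<lambda>j. S j \<rho>) ` J) \<in> (\<lambda>j. S j \<rho>) ` J"
      using assms(1,2) by simp
    moreover have "S j \<rho> \<le> (\<Sum>j\<in>J. S j \<rho>)" if "j \<in> J" for j
      using that assms by (intro member_le_sum) (auto simp: martingale_def)
    ultimately show ?thesis
      by auto
  qed
qed

lemma majorant_Max_le:
  assumes "finite J" "J \<noteq> {}" "\<And>j. j \<in> J \<Longrightarrow> martingale (S j)"
    and "\<And>j. j \<in> J \<Longrightarrow> convergent (var_seq (S j) \<rho>)"
  shows "dominated_submartingale.majorant (\<lambda>\<sigma>. Max ((\<lambda>j. S j \<sigma>) ` J)) \<rho>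
    \<le> Max ((\<lambda>j. S j \<rho>) ` J) + (\<Sum>j\<in>J. sqrt (Var (S j) \<rho>)) / 2"
proof -
  interpret dominated_submartingale "\<lambda>\<sigma>. Max ((\<lambda>j. S j \<sigma>) ` J)" "\<lambda>\<sigma>. \<Sum>j\<in>J. S j \<sigma>"
    using assms(1-3) by (rule dominated_submartingale_Max)
  show ?thesis
  proof (rule majorant_le)
    fix n
    have "avg_ext (\<lambda>\<sigma>. Max ((\<lambda>j. S j \<sigma>) ` J)) \<rho> n
        \<le> avg_ext (\<lambda>\<sigma>. Max ((\<lambda>j. S j \<rho>) ` J) + (\<Sum>j\<in>J. max 0 (S j \<sigma> - S j \<rho>))) \<rho> n"
      using assms(1,2) by (intro avg_ext_mono Max_le_Max_add_sum_pos_diff)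
    also have "\<dots> = Max ((\<lambda>j. S j \<rho>) ` J) + (\<Sum>j\<in>J. avg_ext (\<lambda>\<sigma>. max 0 (S j \<sigma> - S j \<rho>)) \<rho> n)"
      by (simp add: avg_ext_add avg_ext_const avg_ext_sum)
    also have "\<dots> \<le> Max ((\<lambda>j. S j \<rho>) ` J) + (\<Sum>j\<in>J. sqrt (Var (S j) \<rho>) / 2)"
      using assms(3,4)
      by (intro add_left_mono sum_mono avg_ext_pos_dev_le) (auto simp: martingale_iff_fair)
    finally show "avg_ext (\<lambda>\<sigma>. Max ((\<lambda>j. S j \<sigma>) ` J)) \<rho> n
        \<le> Max ((\<lambda>j. S j \<rho>) ` J) + (\<Sum>j\<in>J. sqrt (Var (S j) \<rho>)) / 2"
      by (simp add: sum_divide_distrib)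
  qed
qed

theorem lemma3p8:
  fixes S :: "nat \<Rightarrow> bool list \<Rightarrow> real" and k :: nat and c :: real
  assumes "k > 0"
    and "\<And>j. j < k \<Longrightarrow> martingale (S j)"
    and "\<And>j. j < k \<Longrightarrow> convergent (var_seq (S j) [])"
    and "c > Max {S j [] | j. j < k} + (1/2) * (\<Sum>j<k. sqrt (Var (S j) []))"
  shows "\<exists>S'. martingale S' \<and> S' [] < c
           \<and> (\<forall>\<rho>. S' \<rho> > Max {S j \<rho> | j. j < k})
           \<and> ((\<forall>j<k. bounded (range (S j))) \<longrightarrow> bounded (range S'))"
proof -
  define f where "f = (\<lambda>\<rho>. Max ((\<lambda>j. S j \<rho>) ` {..<k}))"
  have Max_eq: "Max {S j \<rho> | j. j < k} = f \<rho>" for \<rho>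
    by (simp add: f_def setcompr_eq_image lessThan_def)
  have J: "finite {..<k}" "{..<k} \<noteq> {}"
    using \<open>k > 0\<close> by auto
  interpret D: dominated_submartingale f "\<lambda>\<rho>. \<Sum>j<k. S j \<rho>"
    unfolding f_def using J assms(2) by (intro dominated_submartingale_Max) auto
  have "0 \<le> S 0 \<rho>" "S 0 \<rho> \<le> f \<rho>" for \<rho>
    using assms(2)[OF \<open>k > 0\<close>] \<open>k > 0\<close> by (simp_all add: martingale_def f_def)
  then have "0 \<le> f \<rho>" for \<rho>
    by (meson order_trans)
  moreover have "D.majorant [] < c"
    using majorant_Max_le[OF J, of S "[]"] assms(2,3) assms(4)[unfolded Max_eq f_def]
    unfolding f_def by simp
  moreover have "(\<forall>j<k. bounded (range (S j))) \<longrightarrow> bounded (range (\<lambda>\<rho>. \<Sum>j<k. S j \<rho>))"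
    by (auto intro: bounded_range_sum)
  ultimately show ?thesis
    unfolding Max_eq using D.martingale_strictly_above by blast
qed

end
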